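(* Let $p>1$. Then (1) $\sin_p(r+s)\le\sin_p(r)+\sin_p(s)$ for $r,s\in(0,\pi_p/4)$; (2) $\tanh_p(r+s)\le\tanh_p(r)+\tanh_p(s)$ for $r,s\in(0,b_p/2)$; (3) $\tan_p(r+s)\ge\tan_p(r)+\tan_p(s)$ for $r,s\in(0,b_p/2)$; (4) $\sinh_p(r+s)\ge\sinh_p(r)+\sinh_p(s)$ for $r,s\in(0,c_p/2)$.
   Context: For $p>1$ and $y\in(0,1)$ let $\arcsin_p y=\int_0^y(1-t^p)^{-1/p}dt$, $\arctan_p y=\int_0^y(1+t^p)^{-1}dt$, $\operatorname{arsinh}_p y=\int_0^y(1+t^p)^{-1/p}dt$, $\operatorname{artanh}_p y=\int_0^y(1-t^p)^{-1}dt$. Let $\pi_p=\frac{2\pi}{p\sin(\pi/p)}=2\arcsin_p(1)$, $b_p=\arctan_p(1)$, $c_p=\operatorname{arsinh}_p(1)$. Then $\sin_p:(0,\pi_p/2)\to(0,1)$, $\tan_p:(0,b_p)\to(0,1)$, $\sinh_p:(0,c_p)\to(0,1)$, $\tanh_p:(0,\infty)\to(0,1)$ are the inverse functions of $\arcsin_p$, $\arctan_p$, $\operatorname{arsinh}_p$, $\operatorname{artanh}_p$ respectively. *)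

theory Defs
  imports "HOL-Analysis.Analysis"
begin

definition arcsin_p :: "real \<Rightarrow> real \<Rightarrow> real" where
  "arcsin_p p y = integral {0..y} (\<lambda>t. (1 - t powr p) powr (-1/p))"
definition arctan_p :: "real \<Rightarrow> real \<Rightarrow> real" where
  "arctan_p p y = integral {0..y} (\<lambda>t. 1 / (1 + t powr p))"
definition arsinh_p :: "real \<Rightarrow> real \<Rightarrow> real" where
  "arsinh_p p y = integral {0..y} (\<lambda>t. (1 + t powr p) powr (-1/p))"
definition artanh_p :: "real \<Rightarrow> real \<Rightarrow> real" where
  "artanh_p p y = integral {0..y} (\<lambda>t. 1 / (1 - t powr p))"

definition pi_p :: "real \<Rightarrow> real" where
  "pi_p p = 2 * pi / (p * sin (pi / p))"
definition b_p :: "real \<Rightarrow> real" where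
  "b_p p = arctan_p p 1"
definition c_p :: "real \<Rightarrow> real" where
  "c_p p = arsinh_p p 1"

definition sin_p :: "real \<Rightarrow> real \<Rightarrow> real" where
  "sin_p p x = (THE y. y \<in> {0<..<1} \<and> arcsin_p p y = x)"
definition tan_p :: "real \<Rightarrow> real \<Rightarrow> real" where
  "tan_p p x = (THE y. y \<in> {0<..<1} \<and> arctan_p p y = x)"
definition sinh_p :: "real \<Rightarrow> real \<Rightarrow> real" where
  "sinh_p p x = (THE y. y \<in> {0<..<1} \<and> arsinh_p p y = x)"
definition tanh_p :: "real \<Rightarrow> real \<Rightarrow> real" where
  "tanh_p p x = (THE y. y \<in> {0<..<1} \<and> artanh_p p y = x)"

end

theory Submission imports Defs begin

text \<open>
  Each of the four functions is the inverse of a primitive \<open>F y = \<integral>\<^sub>0\<^sup>y g\<close> of a positive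
  continuous density \<open>g\<close>. Writing \<open>F (a + b) = F b + \<integral>\<^sub>0\<^sup>a g (b + t) dt\<close> shows that \<open>F\<close> is
  superadditive when \<open>g\<close> increases and subadditive when \<open>g\<close> decreases; since \<open>F\<close> is strictly
  increasing, its inverse then has the opposite property. The densities of \<open>arcsin\<^sub>p\<close> and
  \<open>artanh\<^sub>p\<close> increase, those of \<open>arctan\<^sub>p\<close> and \<open>arsinh\<^sub>p\<close> decrease. The restrictions on \<open>r, s\<close>
  only ensure that \<open>r + s\<close> lies in the range of the primitive on \<open>(0, 1)\<close>; for \<open>arcsin\<^sub>p\<close> this
  range is \<open>(0, \<pi>\<^sub>p/2)\<close>, which follows from the substitution \<open>t = u\<^bsup>1/p\<^esup>\<close> turning
  \<open>arcsin\<^sub>p\<close> into an incomplete Beta integral and the reflection formula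
  \<open>B(1/p, 1 - 1/p) = \<pi> / sin (\<pi>/p)\<close>.
\<close>

locale positive_density =
  fixes g :: "real \<Rightarrow> real" and L :: real
  assumes continuous: "continuous_on {0..<L} g"
    and positive: "\<And>t. 0 \<le> t \<Longrightarrow> t < L \<Longrightarrow> 0 < g t"
begin

lemma continuous_on_Icc: "0 \<le> a \<Longrightarrow> b < L \<Longrightarrow> continuous_on {a..b} g"
  by (rule continuous_on_subset[OF continuous]) auto

lemma integrable_on_Icc: "0 \<le> a \<Longrightarrow> b < L \<Longrightarrow> g integrable_on {a..b}"
  by (rule integrable_continuous_interval[OF continuous_on_Icc])

lemma integral_Icc_pos:
  assumes "0 \<le> a" "a < b" "b < L"
  shows "0 < integral {a..b} g"
proof -
  obtain m where m: "m \<in> {a..b}" "\<And>y. y \<in> {a..b} \<Longrightarrow> g m \<le> g y"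
    using continuous_attains_inf[OF compact_Icc _ continuous_on_Icc[OF assms(1,3)]] assms
    by auto
  have "0 < g m * (b - a)"
    using m assms by (simp add: positive)
  also have "\<dots> = integral {a..b} (\<lambda>_. g m)"
    using assms by simp
  also have "\<dots> \<le> integral {a..b} g"
    using m integrable_on_Icc[OF assms(1,3)] by (intro integral_le) auto
  finally show ?thesis .
qed

lemma primitive_split:
  assumes "0 \<le> a" "a \<le> b" "b < L"
  shows "integral {0..b} g = integral {0..a} g + integral {a..b} g"
  using Henstock_Kurzweil_Integration.integral_combine[where f = g and a = 0 and c = a and b = b]
    integrable_on_Icc[of 0 b] assms
  by simp

lemma primitive_strict_mono:
  assumes "0 \<le> a" "a < b" "b < L"
  shows "integral {0..a} g < integral {0..b} g"
  using primitive_split[of a b] integral_Icc_pos[OF assms] assms by simp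

lemma primitive_less_iff:
  assumes "0 \<le> a" "0 \<le> b" "a < L" "b < L"
  shows "integral {0..a} g < integral {0..b} g \<longleftrightarrow> a < b"
  using primitive_strict_mono[of a b] primitive_strict_mono[of b a] assms
  by (cases a b rule: linorder_cases) auto

lemma primitive_attains:
  assumes "0 < x" "0 \<le> Y" "Y < L" "x < integral {0..Y} g"
  shows "\<exists>y\<in>{0<..<Y}. integral {0..y} g = x"
proof -
  have "continuous_on {0..Y} (\<lambda>y. integral {0..y} g)"
    using assms by (intro indefinite_integral_continuous_1 integrable_on_Icc) auto
  then obtain y where y: "0 \<le> y" "y \<le> Y" "integral {0..y} g = x"
    using IVT'[of "\<lambda>y. integral {0..y} g" 0 x Y] assms by auto
  have "y \<noteq> 0" "y \<noteq> Y"
    using y assms by auto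
  with y show ?thesis by auto
qed

lemma primitive_shift:
  assumes "0 \<le> a" "0 \<le> b" "a + b < L"
  shows "integral {0..a+b} g = integral {0..b} g + integral {0..a} (\<lambda>t. g (b + t))"
  using primitive_split[of b "a + b"] integral_shift_Icc_real[of 0 a g b] assms
  by (simp add: o_def add.commute)

lemma integrable_on_shifted:
  assumes "0 \<le> a" "0 \<le> b" "a + b < L"
  shows "(\<lambda>t. g (b + t)) integrable_on {0..a}"
proof (rule integrable_continuous_interval)
  show "continuous_on {0..a} (\<lambda>t. g (b + t))"
    using assms
    by (intro continuous_on_compose2[OF continuous_on_Icc[of b "a + b"]] continuous_intros) auto
qed

lemma primitive_superadditive:
  assumes "mono_on {0..<L} g" "0 \<le> a" "0 \<le> b" "a + b < L"
  shows "integral {0..a} g + integral {0..b} g \<le> integral {0..a+b} g"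
proof -
  have "integral {0..a} g \<le> integral {0..a} (\<lambda>t. g (b + t))"
    using assms integrable_on_Icc[of 0 a] integrable_on_shifted[of a b]
    by (intro integral_le) (auto intro: mono_onD)
  then show ?thesis
    using primitive_shift[of a b] assms by simp
qed

lemma primitive_subadditive:
  assumes "antimono_on {0..<L} g" "0 \<le> a" "0 \<le> b" "a + b < L"
  shows "integral {0..a+b} g \<le> integral {0..a} g + integral {0..b} g"
proof -
  have "integral {0..a} (\<lambda>t. g (b + t)) \<le> integral {0..a} g"
    using assms integrable_on_Icc[of 0 a] integrable_on_shifted[of a b]
    by (intro integral_le) (auto intro: monotone_onD[OF assms(1)])
  then show ?thesis
    using primitive_shift[of a b] assms by simp
qed

text \<open>The codomain \<open>(0, 1)\<close> is the one used for \<open>sin\<^sub>p\<close> and its companions; the inverse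
  is only meaningful when \<open>1 \<le> L\<close>.\<close>

definition primitive_inverse :: "real \<Rightarrow> real" where
  "primitive_inverse x = (THE y. y \<in> {0<..<1} \<and> integral {0..y} g = x)"

lemma primitive_inverse_eq:
  assumes "1 \<le> L" "a \<in> {0<..<1}" "integral {0..a} g = x"
  shows "primitive_inverse x = a"
  unfolding primitive_inverse_def
proof (rule the_equality)
  fix y assume "y \<in> {0<..<1} \<and> integral {0..y} g = x"
  then show "y = a"
    using primitive_less_iff[of y a] primitive_less_iff[of a y] assms by auto
qed (use assms in auto)

lemma primitive_inverse_subadditive:
  assumes "1 \<le> L" "mono_on {0..<L} g"
    and onto: "\<And>x. 0 < x \<Longrightarrow> x < R \<Longrightarrow> \<exists>a\<in>{0<..<1}. integral {0..a} g = x"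
    and "0 < r" "0 < s" "r + s < R"
  shows "primitive_inverse (r + s) \<le> primitive_inverse r + primitive_inverse s"
proof -
  obtain a b c where
    a: "a \<in> {0<..<1}" "integral {0..a} g = r" and
    b: "b \<in> {0<..<1}" "integral {0..b} g = s" and
    c: "c \<in> {0<..<1}" "integral {0..c} g = r + s"
    using onto[of r] onto[of s] onto[of "r + s"] assms(4-6) by force
  have "c \<le> a + b"
  proof (cases "a + b < L")
    case True
    then have "integral {0..c} g \<le> integral {0..a+b} g"
      using primitive_superadditive[of a b] a b c assms(2) by simp
    then show ?thesis
      using primitive_less_iff[of "a + b" c] True a b c assms(1) by auto
  qed (use c assms(1) in auto)
  then show ?thesis
    using primitive_inverse_eq[of a r] primitive_inverse_eq[of b s] primitive_inverse_eq[of c "r + s"]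
      a b c assms(1) by simp
qed

text \<open>Here \<open>2 \<le> L\<close> keeps \<open>a + b\<close> in the domain of \<open>g\<close> for preimages \<open>a, b < 1\<close>.\<close>

lemma primitive_inverse_superadditive:
  assumes "2 \<le> L" "antimono_on {0..<L} g"
    and onto: "\<And>x. 0 < x \<Longrightarrow> x < R \<Longrightarrow> \<exists>a\<in>{0<..<1}. integral {0..a} g = x"
    and "0 < r" "0 < s" "r + s < R"
  shows "primitive_inverse r + primitive_inverse s \<le> primitive_inverse (r + s)"
proof -
  obtain a b c where
    a: "a \<in> {0<..<1}" "integral {0..a} g = r" and
    b: "b \<in> {0<..<1}" "integral {0..b} g = s" and
    c: "c \<in> {0<..<1}" "integral {0..c} g = r + s"
    using onto[of r] onto[of s] onto[of "r + s"] assms(4-6) by force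
  have "integral {0..a+b} g \<le> integral {0..c} g"
    using primitive_subadditive[of a b] a b c assms(1,2) by simp
  then have "a + b \<le> c"
    using primitive_less_iff[of c "a + b"] a b c assms(1) by auto
  then show ?thesis
    using primitive_inverse_eq[of a r] primitive_inverse_eq[of b s] primitive_inverse_eq[of c "r + s"]
      a b c assms(1) by simp
qed

end

lemma continuous_on_powr_nonneg_base:
  assumes "0 < p" "S \<subseteq> {0..}"
  shows "continuous_on S (\<lambda>t::real. t powr p)"
  using assms by (intro continuous_on_powr') (auto intro!: continuous_intros)

lemma arcsin_p_density:
  assumes "1 < p"
  shows "positive_density (\<lambda>t. (1 - t powr p) powr (-1/p)) 1"
proof
  have below_one: "t powr p < 1" if "0 \<le> t" "t < 1" for t :: real
    using powr_less_mono2[of p t 1] that assms by simp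
  have "continuous_on {0..<1} (\<lambda>t::real. t powr p)"
    using assms by (intro continuous_on_powr_nonneg_base) auto
  then show "continuous_on {0..<1} (\<lambda>t::real. (1 - t powr p) powr (-1/p))"
    using below_one[THEN less_imp_neq] by (auto intro!: continuous_intros)
  show "\<And>t. 0 \<le> t \<Longrightarrow> t < 1 \<Longrightarrow> 0 < (1 - t powr p) powr (-1/p)"
    using below_one[THEN less_imp_neq] by simp
qed

lemma artanh_p_density:
  assumes "1 < p"
  shows "positive_density (\<lambda>t. 1 / (1 - t powr p)) 1"
proof
  have below_one: "t powr p < 1" if "0 \<le> t" "t < 1" for t :: real
    using powr_less_mono2[of p t 1] that assms by simp
  have "continuous_on {0..<1} (\<lambda>t::real. t powr p)"
    using assms by (intro continuous_on_powr_nonneg_base) auto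
  then show "continuous_on {0..<1} (\<lambda>t::real. 1 / (1 - t powr p))"
    using below_one by (auto intro!: continuous_intros simp: less_imp_neq[symmetric])
  show "\<And>t. 0 \<le> t \<Longrightarrow> t < 1 \<Longrightarrow> 0 < 1 / (1 - t powr p)"
    using below_one by simp
qed

lemma arctan_p_density:
  assumes "1 < p"
  shows "positive_density (\<lambda>t. 1 / (1 + t powr p)) 2"
proof
  have pos: "0 < 1 + t powr p" for t :: real
    by (simp add: add_pos_nonneg)
  have "continuous_on {0..<2} (\<lambda>t::real. t powr p)"
    using assms by (intro continuous_on_powr_nonneg_base) auto
  then show "continuous_on {0..<2} (\<lambda>t::real. 1 / (1 + t powr p))"
    using pos by (auto intro!: continuous_intros simp: less_imp_neq[symmetric])
  show "\<And>t. 0 \<le> t \<Longrightarrow> t < 2 \<Longrightarrow> 0 < 1 / (1 + t powr p)"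
    using pos by simp
qed

lemma arsinh_p_density:
  assumes "1 < p"
  shows "positive_density (\<lambda>t. (1 + t powr p) powr (-1/p)) 2"
proof
  have pos: "0 < 1 + t powr p" for t :: real
    by (simp add: add_pos_nonneg)
  have "continuous_on {0..<2} (\<lambda>t::real. t powr p)"
    using assms by (intro continuous_on_powr_nonneg_base) auto
  then show "continuous_on {0..<2} (\<lambda>t::real. (1 + t powr p) powr (-1/p))"
    using pos[THEN less_imp_neq, THEN not_sym] by (auto intro!: continuous_intros)
  show "\<And>t. 0 \<le> t \<Longrightarrow> t < 2 \<Longrightarrow> 0 < (1 + t powr p) powr (-1/p)"
    using pos[THEN less_imp_neq, THEN not_sym] by simp
qed

lemma mono_on_arcsin_p_density:
  assumes "1 < p"
  shows "mono_on {0..<1} (\<lambda>t::real. (1 - t powr p) powr (-1/p))"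
proof (rule mono_onI)
  fix s t :: real
  assume "s \<in> {0..<1}" "t \<in> {0..<1}" "s \<le> t"
  then show "(1 - s powr p) powr (-1/p) \<le> (1 - t powr p) powr (-1/p)"
    using powr_mono2[of p s t] powr_less_mono2[of p t 1] assms by (intro powr_mono2') auto
qed

lemma mono_on_artanh_p_density:
  assumes "1 < p"
  shows "mono_on {0..<1} (\<lambda>t::real. 1 / (1 - t powr p))"
proof (rule mono_onI)
  fix s t :: real
  assume "s \<in> {0..<1}" "t \<in> {0..<1}" "s \<le> t"
  then show "1 / (1 - s powr p) \<le> 1 / (1 - t powr p)"
    using powr_mono2[of p s t] powr_less_mono2[of p t 1] assms by (intro divide_left_mono) auto
qed

lemma antimono_on_arctan_p_density:
  assumes "1 < p"
  shows "antimono_on {0..<2} (\<lambda>t::real. 1 / (1 + t powr p))"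
proof (rule monotone_onI)
  fix s t :: real
  assume "s \<in> {0..<2}" "t \<in> {0..<2}" "s \<le> t"
  then show "1 / (1 + t powr p) \<le> 1 / (1 + s powr p)"
    using powr_mono2[of p s t] assms by (intro divide_left_mono) (auto simp: add_pos_nonneg)
qed

lemma antimono_on_arsinh_p_density:
  assumes "1 < p"
  shows "antimono_on {0..<2} (\<lambda>t::real. (1 + t powr p) powr (-1/p))"
proof (rule monotone_onI)
  fix s t :: real
  assume "s \<in> {0..<2}" "t \<in> {0..<2}" "s \<le> t"
  then show "(1 + t powr p) powr (-1/p) \<le> (1 + s powr p) powr (-1/p)"
    using powr_mono2[of p s t] assms by (intro powr_mono2') (auto simp: add_pos_nonneg)
qed

lemma arctan_p_onto:
  assumes "1 < p" "0 < x" "x < b_p p"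
  shows "\<exists>a\<in>{0<..<1}. arctan_p p a = x"
  using positive_density.primitive_attains[OF arctan_p_density[OF assms(1)] assms(2), of 1] assms(3)
  unfolding b_p_def arctan_p_def by auto

lemma arsinh_p_onto:
  assumes "1 < p" "0 < x" "x < c_p p"
  shows "\<exists>a\<in>{0<..<1}. arsinh_p p a = x"
  using positive_density.primitive_attains[OF arsinh_p_density[OF assms(1)] assms(2), of 1] assms(3)
  unfolding c_p_def arsinh_p_def by auto

lemma arctan_p_le_artanh_p:
  assumes "1 < p" "0 \<le> y" "y < 1"
  shows "arctan_p p y \<le> artanh_p p y"
  unfolding arctan_p_def artanh_p_def
proof (rule integral_le)
  show "(\<lambda>t. 1 / (1 + t powr p)) integrable_on {0..y}"
    using positive_density.integrable_on_Icc[OF arctan_p_density[OF assms(1)]] assms by simp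
  show "(\<lambda>t. 1 / (1 - t powr p)) integrable_on {0..y}"
    using positive_density.integrable_on_Icc[OF artanh_p_density[OF assms(1)]] assms by simp
  fix t assume "t \<in> {0..y}"
  then have "t powr p < 1"
    using powr_less_mono2[of p t 1] assms by simp
  then show "1 / (1 + t powr p) \<le> 1 / (1 - t powr p)"
    by (intro divide_left_mono) (auto simp: add_pos_nonneg)
qed

lemma artanh_p_onto:
  assumes "1 < p" "0 < x" "x < b_p p"
  shows "\<exists>a\<in>{0<..<1}. artanh_p p a = x"
proof -
  obtain y where y: "y \<in> {0<..<1}" "arctan_p p y = (x + b_p p) / 2"
    using arctan_p_onto[of p "(x + b_p p) / 2"] assms by auto
  then have "x < artanh_p p y"
    using arctan_p_le_artanh_p[of p y] assms by auto
  then show ?thesis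
    using positive_density.primitive_attains[OF artanh_p_density[OF assms(1)] assms(2), of y] y
    unfolding artanh_p_def by auto
qed

lemma Beta_reflection:
  assumes "0 < q" "q < 1"
  shows "Beta q (1 - q) = pi / sin (pi * q)"
proof -
  have "sin (complex_of_real pi * complex_of_real q) = complex_of_real (sin (pi * q))"
    by (metis of_real_mult sin_of_real)
  then have "complex_of_real (Gamma q) * complex_of_real (Gamma (1 - q)) =
      complex_of_real pi / complex_of_real (sin (pi * q))"
    using Gamma_reflection_complex[of "complex_of_real q"]
      Gamma_complex_of_real[of q] Gamma_complex_of_real[of "1 - q"] by simp
  then have "Gamma q * Gamma (1 - q) = pi / sin (pi * q)"
    by (metis of_real_eq_iff of_real_mult of_real_divide)
  then show ?thesis
    by (simp add: Beta_def)
qed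

lemma arcsin_p_powr_eq_Beta_integral:
  assumes "1 < p" "0 < Y" "Y < 1"
  shows "arcsin_p p (Y powr (1/p)) =
    integral {0..Y} (\<lambda>u. u powr (1/p - 1) * (1 - u) powr ((1 - 1/p) - 1)) / p"
proof -
  define q where "q = 1/p"
  have q: "0 < q" "q < 1"
    using assms by (auto simp: q_def)
  define y where "y = Y powr q"
  have y: "0 < y" "y < 1"
    using powr_less_mono2[of q Y 1] assms q by (auto simp: y_def)
  let ?f = "\<lambda>t. (1 - t powr p) powr (-1/p)"
  let ?h = "\<lambda>u. u powr (q - 1) * (1 - u) powr ((1 - q) - 1)"
  have substitution: "((\<lambda>u. (q * u powr (q - 1)) *\<^sub>R ?f (u powr q)) has_integral
      (integral {0 powr q..Y powr q} ?f - integral {Y powr q..0 powr q} ?f)) {0..Y}"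
  proof (rule has_integral_substitution_general[where s = "{0}" and c = 0 and d = y])
    show "(\<lambda>u. u powr q) ` {0..Y} \<subseteq> {0..y}"
    proof (rule image_subsetI)
      fix u assume "u \<in> {0..Y}"
      then show "u powr q \<in> {0..y}"
        using powr_mono2[of q u Y] q by (simp add: y_def)
    qed
    show "continuous_on {0..y} ?f"
      using y by (intro positive_density.continuous_on_Icc[OF arcsin_p_density[OF assms(1)]]) auto
    show "continuous_on {0..Y} (\<lambda>u. u powr q)"
      using q by (intro continuous_on_powr_nonneg_base) auto
    fix u assume "u \<in> {0..Y} - {0}"
    then have "0 < u"
      by auto
    then show "((\<lambda>u. u powr q) has_real_derivative q * u powr (q - 1)) (at u within {0..Y})"
      by (rule has_field_derivative_at_within[OF has_real_derivative_powr])
  qed (use assms in auto)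
  have integrand: "(q * u powr (q - 1)) *\<^sub>R ?f (u powr q) = q * ?h u" if "u \<in> {0..Y}" for u
  proof -
    have "(u powr q) powr p = u"
      using that assms by (simp add: powr_powr q_def)
    then show ?thesis
      by (simp add: q_def)
  qed
  have endpoints: "integral {0 powr q..Y powr q} ?f - integral {Y powr q..0 powr q} ?f = arcsin_p p y"
    using y by (simp add: arcsin_p_def y_def)
  have "((\<lambda>u. q * ?h u) has_integral arcsin_p p y) {0..Y}"
    using substitution unfolding endpoints
    by (rule has_integral_cong[THEN iffD1, rotated]) (use integrand in auto)
  moreover have "?h integrable_on {0..Y}"
    using integrable_on_subinterval[OF integrable_Beta'[of q "1 - q"]] q assms by simp
  then have "((\<lambda>u. q * ?h u) has_integral q * integral {0..Y} ?h) {0..Y}"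
    by (intro has_integral_mult_right integrable_integral)
  ultimately have "arcsin_p p y = q * integral {0..Y} ?h"
    by (rule has_integral_unique)
  then show ?thesis
    by (simp add: y_def q_def)
qed

lemma arcsin_p_onto:
  assumes "1 < p" "0 < x" "x < pi_p p / 2"
  shows "\<exists>a\<in>{0<..<1}. arcsin_p p a = x"
proof -
  define \<Phi> where "\<Phi> Y = integral {0..Y} (\<lambda>u. u powr (1/p - 1) * (1 - u) powr ((1 - 1/p) - 1))"
    for Y
  have exponents: "0 < 1/p" "0 < 1 - 1/p"
    using assms by auto
  have "\<Phi> 1 = Beta (1/p) (1 - 1/p)"
    unfolding \<Phi>_def using has_integral_Beta_real[OF exponents] by (rule integral_unique)
  also have "\<dots> = pi / sin (pi / p)"
    using Beta_reflection[of "1/p"] assms by simp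
  also have "\<dots> = p * (pi_p p / 2)"
    using assms by (simp add: pi_p_def)
  finally have "p * x < \<Phi> 1"
    using assms by (simp only:) (intro mult_strict_left_mono, auto)
  moreover have "continuous_on {0..1} \<Phi>"
    unfolding \<Phi>_def by (rule indefinite_integral_continuous_1[OF integrable_Beta'[OF exponents]])
  moreover have "\<Phi> 0 = 0"
    by (simp add: \<Phi>_def)
  ultimately obtain Y where Y: "0 \<le> Y" "Y \<le> 1" "\<Phi> Y = p * x"
    using IVT'[of \<Phi> 0 "p * x" 1] assms by auto
  then have "Y \<noteq> 0" "Y \<noteq> 1"
    using \<open>p * x < \<Phi> 1\<close> \<open>\<Phi> 0 = 0\<close> assms by auto
  with Y have "0 < Y" "Y < 1"
    by auto
  then have "Y powr (1/p) \<in> {0<..<1}"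
    using powr_less_mono2[of "1/p" Y 1] assms by simp
  moreover have "arcsin_p p (Y powr (1/p)) = x"
    using arcsin_p_powr_eq_Beta_integral[OF assms(1) \<open>0 < Y\<close> \<open>Y < 1\<close>] Y(3) assms
    unfolding \<Phi>_def by simp
  ultimately show ?thesis
    by blast
qed

lemma sin_p_subadditive:
  assumes "1 < p" "0 < r" "0 < s" "r + s < pi_p p / 2"
  shows "sin_p p (r + s) \<le> sin_p p r + sin_p p s"
proof -
  interpret positive_density "\<lambda>t. (1 - t powr p) powr (-1/p)" 1
    by (rule arcsin_p_density[OF assms(1)])
  have "sin_p p = primitive_inverse"
    unfolding sin_p_def arcsin_p_def primitive_inverse_def ..
  then show ?thesis
    using primitive_inverse_subadditive[where R = "pi_p p / 2", OF _ mono_on_arcsin_p_density[OF assms(1)]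
        arcsin_p_onto[OF assms(1), unfolded arcsin_p_def]] assms
    by simp
qed

lemma tanh_p_subadditive:
  assumes "1 < p" "0 < r" "0 < s" "r + s < b_p p"
  shows "tanh_p p (r + s) \<le> tanh_p p r + tanh_p p s"
proof -
  interpret positive_density "\<lambda>t. 1 / (1 - t powr p)" 1
    by (rule artanh_p_density[OF assms(1)])
  have "tanh_p p = primitive_inverse"
    unfolding tanh_p_def artanh_p_def primitive_inverse_def ..
  then show ?thesis
    using primitive_inverse_subadditive[where R = "b_p p", OF _ mono_on_artanh_p_density[OF assms(1)]
        artanh_p_onto[OF assms(1), unfolded artanh_p_def]] assms
    by simp
qed

lemma tan_p_superadditive:
  assumes "1 < p" "0 < r" "0 < s" "r + s < b_p p"
  shows "tan_p p r + tan_p p s \<le> tan_p p (r + s)"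
proof -
  interpret positive_density "\<lambda>t. 1 / (1 + t powr p)" 2
    by (rule arctan_p_density[OF assms(1)])
  have "tan_p p = primitive_inverse"
    unfolding tan_p_def arctan_p_def primitive_inverse_def ..
  then show ?thesis
    using primitive_inverse_superadditive[where R = "b_p p", OF _ antimono_on_arctan_p_density[OF assms(1)]
        arctan_p_onto[OF assms(1), unfolded arctan_p_def]] assms
    by simp
qed

lemma sinh_p_superadditive:
  assumes "1 < p" "0 < r" "0 < s" "r + s < c_p p"
  shows "sinh_p p r + sinh_p p s \<le> sinh_p p (r + s)"
proof -
  interpret positive_density "\<lambda>t. (1 + t powr p) powr (-1/p)" 2
    by (rule arsinh_p_density[OF assms(1)])
  have "sinh_p p = primitive_inverse"
    unfolding sinh_p_def arsinh_p_def primitive_inverse_def ..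
  then show ?thesis
    using primitive_inverse_superadditive[where R = "c_p p", OF _ antimono_on_arsinh_p_density[OF assms(1)]
        arsinh_p_onto[OF assms(1), unfolded arsinh_p_def]] assms
    by simp
qed

theorem lemma2p11:
  fixes p :: real
  assumes "p > 1"
  shows "(\<forall>r s. r \<in> {0<..<pi_p p / 4} \<and> s \<in> {0<..<pi_p p / 4} \<longrightarrow>
            sin_p p (r + s) \<le> sin_p p r + sin_p p s)
       \<and> (\<forall>r s. r \<in> {0<..<b_p p / 2} \<and> s \<in> {0<..<b_p p / 2} \<longrightarrow>
            tanh_p p (r + s) \<le> tanh_p p r + tanh_p p s)
       \<and> (\<forall>r s. r \<in> {0<..<b_p p / 2} \<and> s \<in> {0<..<b_p p / 2} \<longrightarrow>
            tan_p p (r + s) \<ge> tan_p p r + tan_p p s)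
       \<and> (\<forall>r s. r \<in> {0<..<c_p p / 2} \<and> s \<in> {0<..<c_p p / 2} \<longrightarrow>
            sinh_p p (r + s) \<ge> sinh_p p r + sinh_p p s)"
  using sin_p_subadditive[OF assms] tanh_p_subadditive[OF assms]
    tan_p_superadditive[OF assms] sinh_p_superadditive[OF assms]
  by auto

end
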